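(* Consider the Bregman proximal augmented Lagrangian method described in the context with $\psi=\frac12\|\cdot\|^2$, $\phi$ Legendre and $0\le\rho_k\le\rho<1$. Let $(x^\star,y^\star)\in\operatorname{zer}T$ with $y^\star\in\operatorname{dom}\phi$ (so $y^\star\in\operatorname{argmin}F^*(0,\cdot)$), and assume that $\{y^{k+1}\}_{k\ge0}$ is bounded (which holds, e.g., if $D_\phi(y^\star,\cdot)$ is coercive). Then $F^*(v^k,y^{k+1})\to F^*(0,y^\star)$, and every limit point $y^\infty$ of $\{y^{k+1}\}_{k\ge0}$ is a dual solution, i.e. $y^\infty\in\operatorname{argmin}F^*(0,\cdot)$.
   Context: Let $f\in\Gamma_0(\mathbb{R}^n)$, $g\in\Gamma_0(\mathbb{R}^m)$ (proper lsc convex), $A\in\mathbb{R}^{m\times n}$, $b\in\mathbb{R}^m$, $\mathcal{A}(x)=Ax-b$. $L(x,y)=f(x)+\langle\mathcal{A}(x),y\rangle-g^*(y)$; KKT operator $T(x,y)=(\partial f(x)+A^\top y)\times(\partial g^*(y)+b-Ax)$ (maximal monotone), $\operatorname{zer}T=T^{-1}(0)$. The dual perturbation function is $F^*(v,y)=\sup_x\{\langle x,v\rangle-L(x,y)\}=f^*(v-A^\top y)+\langle b,y\rangle+g^*(y)$. A function $h\in\Gamma_0$ is Legendre if essentially smooth ($\operatorname{int}\operatorname{dom}h\ne\emptyset$, differentiable there, $\|\nabla h(z^\nu)\|\to\infty$ whenever $\operatorname{int}\operatorname{dom}h\ni z^\nu\to z\in\operatorname{bdry}\operatorname{dom}h$)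 and essentially strictly convex (strictly convex on every convex subset of $\operatorname{dom}\partial h$); $\nabla h^*$ is the inverse of $\nabla h$ on interiors of domains. $D_h(a,c)=h(a)-h(c)-\langle\nabla h(c),a-c\rangle$ for $a\in\operatorname{dom}h$, $c\in\operatorname{int}\operatorname{dom}h$, $+\infty$ otherwise. Let $\psi\in\Gamma_0(\mathbb{R}^n)$, $\phi\in\Gamma_0(\mathbb{R}^m)$ be Legendre, $\Phi(x,y)=\psi(x)+\phi(y)$, and assume $\operatorname{int}\operatorname{dom}\Phi\cap\operatorname{dom}T\ne\emptyset$. Bregman proximal augmented Lagrangian method: given $x^0\in\operatorname{int}\operatorname{dom}\psi$, $y^0\in\operatorname{int}\operatorname{dom}\phi$, step sizes $\sigma_k\ge\sigma>0$ and $\rho_k\in[0,1)$, it generates $s^k\in\operatorname{dom}\psi$, $x^{k+1},y^{k+1},v^k,u^k$ with $(v^k,u^k)\in T(s^k,y^{k+1})$, $x^{k+1}=\nabla\psi^*(\nabla\psi(x^k)-\sigma_kv^k)\in\operatorname{int}\operatorname{dom}\psi$, $y^{k+1}=\nabla\phi^*(\nabla\phi(y^k)-\sigma_ku^k)\in\operatorname{int}\operatorname{dom}\phi$, and $D_\psi(s^k,x^{k+1})\le\rho_k\big(D_\psi(s^k,x^k)+D_\phi(y^{k+1},y^k)\big)$. A function is coercive if it tends to $+\infty$ as the norm of its argument tends to $\infty$. *)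

theory Defs
  imports "HOL-Analysis.Analysis" "HOL-Library.Extended_Real"
begin

text \<open>Functions with values in the extended reals; the value \<open>\<infinity>\<close> encodes points
outside the effective domain.\<close>

definition edom :: "('a \<Rightarrow> ereal) \<Rightarrow> 'a set" where
  "edom f = {x. f x < \<infinity>}"

definition proper_fun :: "('a \<Rightarrow> ereal) \<Rightarrow> bool" where
  "proper_fun f \<longleftrightarrow> (\<forall>x. f x \<noteq> -\<infinity>) \<and> edom f \<noteq> {}"

definition epigraph :: "('a \<Rightarrow> ereal) \<Rightarrow> ('a \<times> real) set" where
  "epigraph f = {(x, r). f x \<le> ereal r}"

definition convex_efun :: "('a::real_vector \<Rightarrow> ereal) \<Rightarrow> bool" where
  "convex_efun f \<longleftrightarrow> convex (epigraph f)"

definition lsc_efun :: "('a::topological_space \<Rightarrow> ereal) \<Rightarrow> bool" where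
  "lsc_efun f \<longleftrightarrow> closed (epigraph f)"

definition Gamma0 :: "('a::euclidean_space \<Rightarrow> ereal) \<Rightarrow> bool" where
  "Gamma0 f \<longleftrightarrow> proper_fun f \<and> convex_efun f \<and> lsc_efun f"

definition fconj :: "('a::real_inner \<Rightarrow> ereal) \<Rightarrow> 'a \<Rightarrow> ereal" where
  "fconj f v = (SUP x. ereal (inner x v) - f x)"

definition subdiff :: "('a::real_inner \<Rightarrow> ereal) \<Rightarrow> 'a \<Rightarrow> 'a set" where
  "subdiff f x = {w. f x < \<infinity> \<and> (\<forall>z. f x + ereal (inner w (z - x)) \<le> f z)}"

definition dom_subdiff :: "('a::real_inner \<Rightarrow> ereal) \<Rightarrow> 'a set" where
  "dom_subdiff f = {x. subdiff f x \<noteq> {}}"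

text \<open>Gradient of \<open>h\<close> at a point (meaningful where \<open>h\<close> is finite and differentiable).\<close>
definition egrad :: "('a::real_inner \<Rightarrow> ereal) \<Rightarrow> 'a \<Rightarrow> 'a" where
  "egrad h z = (SOME D. GDERIV (\<lambda>w. real_of_ereal (h w)) z :> D)"

definition essentially_smooth :: "('a::euclidean_space \<Rightarrow> ereal) \<Rightarrow> bool" where
  "essentially_smooth h \<longleftrightarrow>
     interior (edom h) \<noteq> {} \<and>
     (\<forall>z\<in>interior (edom h). (\<lambda>w. real_of_ereal (h w)) differentiable (at z)) \<and>
     (\<forall>zs z. (\<forall>k. zs k \<in> interior (edom h)) \<longrightarrow> zs \<longlonglongrightarrow> z \<longrightarrow> z \<in> frontier (edom h) \<longrightarrow>
        filterlim (\<lambda>k. norm (egrad h (zs k))) at_top sequentially)"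

definition strictly_convex_on_efun :: "'a::real_vector set \<Rightarrow> ('a \<Rightarrow> ereal) \<Rightarrow> bool" where
  "strictly_convex_on_efun C h \<longleftrightarrow>
     (\<forall>x\<in>C. \<forall>y\<in>C. \<forall>t::real. x \<noteq> y \<longrightarrow> 0 < t \<longrightarrow> t < 1 \<longrightarrow>
        h ((1 - t) *\<^sub>R x + t *\<^sub>R y) < ereal (1 - t) * h x + ereal t * h y)"

definition essentially_strictly_convex :: "('a::euclidean_space \<Rightarrow> ereal) \<Rightarrow> bool" where
  "essentially_strictly_convex h \<longleftrightarrow>
     (\<forall>C. convex C \<longrightarrow> C \<subseteq> dom_subdiff h \<longrightarrow> strictly_convex_on_efun C h)"

definition Legendre :: "('a::euclidean_space \<Rightarrow> ereal) \<Rightarrow> bool" where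
  "Legendre h \<longleftrightarrow> Gamma0 h \<and> essentially_smooth h \<and> essentially_strictly_convex h"

definition Bregman :: "('a::real_inner \<Rightarrow> ereal) \<Rightarrow> 'a \<Rightarrow> 'a \<Rightarrow> ereal" where
  "Bregman h a c =
     (if a \<in> edom h \<and> c \<in> interior (edom h)
      then h a - h c - ereal (inner (egrad h c) (a - c)) else \<infinity>)"

definition KKT :: "(real^'n \<Rightarrow> ereal) \<Rightarrow> (real^'m \<Rightarrow> ereal) \<Rightarrow> real^'n^'m \<Rightarrow> real^'m
    \<Rightarrow> real^'n \<Rightarrow> real^'m \<Rightarrow> ((real^'n) \<times> (real^'m)) set" where
  "KKT f g A b x y =
     {(v, u). \<exists>p\<in>subdiff f x. \<exists>q\<in>subdiff (fconj g) y.
        v = p + transpose A *v y \<and> u = q + b - A *v x}"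

definition zerT :: "(real^'n \<Rightarrow> ereal) \<Rightarrow> (real^'m \<Rightarrow> ereal) \<Rightarrow> real^'n^'m \<Rightarrow> real^'m
    \<Rightarrow> ((real^'n) \<times> (real^'m)) set" where
  "zerT f g A b = {(x, y). (0, 0) \<in> KKT f g A b x y}"

definition domT :: "(real^'n \<Rightarrow> ereal) \<Rightarrow> (real^'m \<Rightarrow> ereal) \<Rightarrow> real^'n^'m \<Rightarrow> real^'m
    \<Rightarrow> ((real^'n) \<times> (real^'m)) set" where
  "domT f g A b = {(x, y). KKT f g A b x y \<noteq> {}}"

definition Fstar :: "(real^'n \<Rightarrow> ereal) \<Rightarrow> (real^'m \<Rightarrow> ereal) \<Rightarrow> real^'n^'m \<Rightarrow> real^'m
    \<Rightarrow> real^'n \<Rightarrow> real^'m \<Rightarrow> ereal" where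
  "Fstar f g A b v y = fconj f (v - transpose A *v y) + ereal (inner b y) + fconj g y"

definition argmin_set :: "('a \<Rightarrow> ereal) \<Rightarrow> 'a set" where
  "argmin_set F = {y. \<forall>z. F y \<le> F z}"

definition sepsum :: "('a \<Rightarrow> ereal) \<Rightarrow> ('b \<Rightarrow> ereal) \<Rightarrow> 'a \<times> 'b \<Rightarrow> ereal" where
  "sepsum \<psi> \<phi> p = \<psi> (fst p) + \<phi> (snd p)"

definition half_sq_norm :: "'a::real_normed_vector \<Rightarrow> ereal" where
  "half_sq_norm x = ereal ((1/2) * (norm x)\<^sup>2)"

end

theory Submission
  imports Defs
begin

text \<open>
  With \<open>\<psi> = \<onehalf>\<parallel>\<cdot>\<parallel>\<^sup>2\<close> the primal update is \<open>x\<^sub>k\<^sub>+\<^sub>1 = x\<^sub>k - \<sigma>\<^sub>k v\<^sub>k\<close>, and because \<open>\<phi>\<close> is Legendre the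
  dual update reads \<open>\<nabla>\<phi>(y\<^sub>k\<^sub>+\<^sub>1) = \<nabla>\<phi>(y\<^sub>k) - \<sigma>\<^sub>k u\<^sub>k\<close>.  The latter needs \<open>\<nabla>\<phi>(\<nabla>\<phi>\<^sup>*(z)) = z\<close>, i.e.
  differentiability of \<open>\<phi>\<^sup>*\<close> with gradient the maximizer of \<open>\<langle>w,z\<rangle> - \<phi>(w)\<close>: maximizers exist
  because \<open>\<phi>\<^sup>*\<close> is locally bounded, are unique by essential strict convexity, and hence depend
  continuously on \<open>z\<close> (Danskin).

  The three-point identities for \<open>\<onehalf>\<parallel>\<cdot>\<parallel>\<^sup>2\<close> and for \<open>D\<^sub>\<phi>\<close> turn the two updates into the
  descent inequality \<open>\<sigma> T\<^sub>k + (1 - \<rho>) E\<^sub>k \<le> V\<^sub>k - V\<^sub>k\<^sub>+\<^sub>1\<close> for the Lyapunov function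
  \<open>V\<^sub>k = \<onehalf>\<parallel>x\<^sub>k - x\<^sup>\<star>\<parallel>\<^sup>2 + D\<^sub>\<phi>(y\<^sup>\<star>, y\<^sub>k)\<close>, where \<open>E\<^sub>k = \<onehalf>\<parallel>x\<^sub>k - s\<^sub>k\<parallel>\<^sup>2 + D\<^sub>\<phi>(y\<^sub>k\<^sub>+\<^sub>1, y\<^sub>k)\<close> and
  \<open>T\<^sub>k = \<langle>v\<^sub>k, s\<^sub>k - x\<^sup>\<star>\<rangle> + \<langle>u\<^sub>k, y\<^sub>k\<^sub>+\<^sub>1 - y\<^sup>\<star>\<rangle> \<ge> 0\<close> by monotonicity of the KKT operator.  Hence
  \<open>E\<^sub>k \<rightarrow> 0\<close>, so \<open>v\<^sub>k \<rightarrow> 0\<close>, and \<open>T\<^sub>k \<rightarrow> 0\<close>.  Duality squeezes \<open>F\<^sup>*(v\<^sub>k, y\<^sub>k\<^sub>+\<^sub>1)\<close> between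
  \<open>F\<^sup>*(0, y\<^sup>\<star>) + \<langle>x\<^sup>\<star>, v\<^sub>k\<rangle>\<close> and the same quantity plus \<open>T\<^sub>k\<close>, and lower semicontinuity of \<open>F\<^sup>*\<close>
  passes the limit to cluster points of \<open>(y\<^sub>k\<^sub>+\<^sub>1)\<close>.
\<close>

section \<open>Proper functions and Fenchel conjugates\<close>

lemma proper_fun_neq_minf: "proper_fun h \<Longrightarrow> h x \<noteq> -\<infinity>"
  by (simp add: proper_fun_def)

lemma proper_fun_obtains_finite:
  assumes "proper_fun h"
  obtains x r where "h x = ereal r"
proof -
  from assms obtain x where "h x < \<infinity>" "h x \<noteq> -\<infinity>"
    unfolding proper_fun_def edom_def by auto
  then show ?thesis using that by (cases "h x") auto
qed

lemma proper_fun_ereal_real: "proper_fun h \<Longrightarrow> a \<in> edom h \<Longrightarrow> ereal (real_of_ereal (h a)) = h a"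
  using proper_fun_neq_minf[of h a] unfolding edom_def by (cases "h a") auto

lemma proper_fun_edomE:
  assumes "proper_fun h" "a \<in> edom h"
  obtains r where "h a = ereal r"
  using proper_fun_ereal_real[OF assms] by metis

lemma Gamma0_proper: "Gamma0 h \<Longrightarrow> proper_fun h"
  and Gamma0_convex: "Gamma0 h \<Longrightarrow> convex_efun h"
  and Gamma0_lsc: "Gamma0 h \<Longrightarrow> lsc_efun h"
  by (simp_all add: Gamma0_def)

lemma convex_efunD:
  assumes "convex_efun h" "h a \<le> ereal ra" "h c \<le> ereal rc" "0 \<le> t" "t \<le> 1"
  shows "h ((1 - t) *\<^sub>R a + t *\<^sub>R c) \<le> ereal ((1 - t) * ra + t * rc)"
proof -
  have "(a, ra) \<in> epigraph h" "(c, rc) \<in> epigraph h" using assms by (auto simp: epigraph_def)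
  then have "(1 - t) *\<^sub>R (a, ra) + t *\<^sub>R (c, rc) \<in> epigraph h"
    using assms convexD[of "epigraph h"] unfolding convex_efun_def by auto
  then show ?thesis by (simp add: epigraph_def)
qed

lemma lsc_efunD:
  fixes h :: "'a::metric_space \<Rightarrow> ereal"
  assumes "lsc_efun h" "\<And>j. h (xs j) \<le> ereal (cs j)" "xs \<longlonglongrightarrow> w" "cs \<longlonglongrightarrow> c"
  shows "h w \<le> ereal c"
proof -
  have "(\<lambda>j. (xs j, cs j)) \<longlonglongrightarrow> (w, c)" using assms(3,4) by (rule tendsto_Pair)
  moreover have "\<forall>j. (xs j, cs j) \<in> epigraph h" using assms(2) by (simp add: epigraph_def)
  ultimately have "(w, c) \<in> epigraph h"
    using assms(1) closed_sequential_limits[of "epigraph h"] unfolding lsc_efun_def by auto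
  then show ?thesis by (simp add: epigraph_def)
qed

text \<open>A definition rather than an abbreviation, so that \<open>fconj h y = ereal (real_fconj h y)\<close>
  can be used as a rewrite rule without looping.\<close>
definition real_fconj :: "('a::real_inner \<Rightarrow> ereal) \<Rightarrow> 'a \<Rightarrow> real" where
  "real_fconj h y = real_of_ereal (fconj h y)"

lemma fenchel_young: "ereal (inner x z) - h x \<le> fconj h z"
  unfolding fconj_def by (rule SUP_upper) simp

lemma fconj_le_iff: "fconj h z \<le> c \<longleftrightarrow> (\<forall>x. ereal (inner x z) - h x \<le> c)"
  unfolding fconj_def by (simp add: SUP_le_iff)

lemma fconj_le_ereal:
  assumes "proper_fun h" "\<And>x r. h x = ereal r \<Longrightarrow> inner x z - r \<le> c"
  shows "fconj h z \<le> ereal c"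
  unfolding fconj_le_iff
proof
  fix x show "ereal (inner x z) - h x \<le> ereal c"
    using assms(2)[of x] proper_fun_neq_minf[OF assms(1), of x] by (cases "h x") auto
qed

lemma fconj_neq_minf:
  assumes "proper_fun h"
  shows "fconj h z \<noteq> -\<infinity>"
proof -
  obtain x r where "h x = ereal r" using proper_fun_obtains_finite[OF assms] .
  then show ?thesis using fenchel_young[of x z h] by auto
qed

lemma fconj_edom_finite:
  "proper_fun h \<Longrightarrow> w \<in> edom (fconj h) \<Longrightarrow> fconj h w = ereal (real_fconj h w)"
  using fconj_neq_minf[of h w] unfolding edom_def real_fconj_def by (cases "fconj h w") auto

lemma fconj_convex_comb:
  assumes "proper_fun h" "fconj h a \<le> ereal ra" "fconj h c \<le> ereal rc" "0 \<le> t" "t \<le> 1"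
  shows "fconj h ((1 - t) *\<^sub>R a + t *\<^sub>R c) \<le> ereal ((1 - t) * ra + t * rc)"
proof (rule fconj_le_ereal[OF assms(1)])
  fix x r assume r: "h x = ereal r"
  have "inner x a - r \<le> ra" "inner x c - r \<le> rc"
    using order_trans[OF fenchel_young[of x a h] assms(2)]
      order_trans[OF fenchel_young[of x c h] assms(3)] r
    by simp_all
  then have "(1 - t) * (inner x a - r) + t * (inner x c - r) \<le> (1 - t) * ra + t * rc"
    using assms(4,5) by (intro add_mono mult_left_mono) auto
  then show "inner x ((1 - t) *\<^sub>R a + t *\<^sub>R c) - r \<le> (1 - t) * ra + t * rc"
    by (simp add: inner_add_right algebra_simps)
qed

lemma convex_edom_fconj:
  assumes "proper_fun h"
  shows "convex (edom (fconj h))"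
  unfolding convex_alt
proof clarify
  fix a c and t :: real
  assume "a \<in> edom (fconj h)" "c \<in> edom (fconj h)" "0 \<le> t" "t \<le> 1"
  then have "fconj h ((1 - t) *\<^sub>R a + t *\<^sub>R c) \<le> ereal ((1 - t) * real_fconj h a + t * real_fconj h c)"
    using fconj_edom_finite[OF assms] by (intro fconj_convex_comb[OF assms]) simp_all
  then show "(1 - t) *\<^sub>R a + t *\<^sub>R c \<in> edom (fconj h)"
    unfolding edom_def using le_less_trans by fastforce
qed

lemma convex_on_real_fconj:
  assumes "proper_fun h"
  shows "convex_on (interior (edom (fconj h))) (real_fconj h)"
proof (rule convex_onI)
  show "convex (interior (edom (fconj h)))" using convex_edom_fconj[OF assms] by simp
next
  fix t :: real and a c
  assume t: "0 < t" "t < 1" and "a \<in> interior (edom (fconj h))" "c \<in> interior (edom (fconj h))"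
  then have ac: "a \<in> edom (fconj h)" "c \<in> edom (fconj h)" using interior_subset by auto
  then have "(1 - t) *\<^sub>R a + t *\<^sub>R c \<in> edom (fconj h)"
    using convex_edom_fconj[OF assms] t convexD[of "edom (fconj h)" a c "1 - t" t] by auto
  moreover have "fconj h ((1 - t) *\<^sub>R a + t *\<^sub>R c) \<le> ereal ((1 - t) * real_fconj h a + t * real_fconj h c)"
    using fconj_edom_finite[OF assms] ac t by (intro fconj_convex_comb[OF assms]) simp_all
  ultimately show
    "real_fconj h ((1 - t) *\<^sub>R a + t *\<^sub>R c) \<le> (1 - t) * real_fconj h a + t * real_fconj h c"
    using fconj_edom_finite[OF assms] by (metis ereal_less_eq(3))
qed

lemma continuous_on_real_fconj:
  fixes h :: "'a::euclidean_space \<Rightarrow> ereal"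
  assumes "proper_fun h"
  shows "continuous_on (interior (edom (fconj h))) (real_fconj h)"
  by (rule convex_on_continuous[OF _ convex_on_real_fconj[OF assms]]) simp

lemma fconj_locally_bounded:
  fixes h :: "'a::euclidean_space \<Rightarrow> ereal"
  assumes "proper_fun h" "z \<in> interior (edom (fconj h))"
  obtains d B where "d > 0" "cball z (2 * d) \<subseteq> interior (edom (fconj h))"
    "\<And>y. y \<in> cball z (2 * d) \<Longrightarrow> \<bar>real_fconj h y\<bar> \<le> B"
proof -
  obtain e where e: "e > 0" "cball z e \<subseteq> interior (edom (fconj h))"
    using assms(2) open_contains_cball[of "interior (edom (fconj h))"] by auto
  have "compact (real_fconj h ` cball z e)"
    using continuous_on_subset[OF continuous_on_real_fconj[OF assms(1)] e(2)]
    by (intro compact_continuous_image) auto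
  then obtain B where "\<forall>r \<in> real_fconj h ` cball z e. norm r \<le> B"
    using compact_imp_bounded bounded_iff by metis
  then show ?thesis using that[of "e / 2" B] e by auto
qed

section \<open>Gradients\<close>

lemma gderiv_unique:
  assumes "GDERIV f x :> D1" "GDERIV f x :> D2"
  shows "D1 = D2"
proof -
  have "(\<lambda>v. inner v D1) = (\<lambda>v. inner v D2)"
    using has_derivative_unique assms unfolding gderiv_def by blast
  then have "inner (D1 - D2) (D1 - D2) = 0" by (metis inner_diff_right diff_self)
  then show ?thesis by simp
qed

lemma egrad_eq: "GDERIV (\<lambda>w. real_of_ereal (h w)) z :> D \<Longrightarrow> egrad h z = D"
  unfolding egrad_def by (rule someI2[of _ D]) (auto intro: gderiv_unique)

lemma gderiv_exists:
  fixes f :: "'a::euclidean_space \<Rightarrow> real"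
  assumes "f differentiable (at c)"
  shows "\<exists>D. GDERIV f c :> D"
proof -
  obtain f' where f': "(f has_derivative f') (at c)" using assms unfolding differentiable_def by blast
  then have lin: "linear f'" using has_derivative_linear by blast
  define D where "D = (\<Sum>i\<in>Basis. f' i *\<^sub>R i)"
  have "f' x = inner x D" for x
  proof -
    have "f' x \<bullet> 1 = (\<Sum>i\<in>Basis. (x \<bullet> i) * (f' i \<bullet> 1))"
      by (rule Linear_Algebra.linear_componentwise[OF lin])
    then show ?thesis by (simp add: D_def inner_sum_right mult.commute)
  qed
  then have "f' = (\<lambda>x. inner x D)" by auto
  then show ?thesis using f' unfolding gderiv_def by blast
qed

lemma egrad_gderiv:
  fixes h :: "'a::euclidean_space \<Rightarrow> ereal"
  assumes "(\<lambda>w. real_of_ereal (h w)) differentiable (at c)"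
  shows "GDERIV (\<lambda>w. real_of_ereal (h w)) c :> egrad h c"
  using gderiv_exists[OF assms] egrad_eq by metis

lemma gderiv_difference_quotient:
  assumes "GDERIV f c :> D"
  shows "((\<lambda>t. (f (c + t *\<^sub>R d) - f c) / t) \<longlongrightarrow> inner d D) (at_right 0)"
proof -
  have "((\<lambda>t. c + t *\<^sub>R d) has_derivative (\<lambda>t. t *\<^sub>R d)) (at 0)"
    by (auto intro!: derivative_eq_intros)
  moreover have "(f has_derivative (\<lambda>v. inner v D)) (at (c + 0 *\<^sub>R d))"
    using assms unfolding gderiv_def by simp
  ultimately have "((\<lambda>t. f (c + t *\<^sub>R d)) has_derivative (\<lambda>t. t * inner d D)) (at 0)"
    using diff_chain_at by (fastforce simp: o_def)
  moreover have "(\<lambda>t. t * inner d D) = (*) (inner d D)" by (auto simp: mult.commute)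
  ultimately have "((\<lambda>t. f (c + t *\<^sub>R d)) has_real_derivative inner d D) (at 0)"
    unfolding has_field_derivative_def by simp
  then show ?thesis unfolding has_field_derivative_iff by (simp add: filterlim_at_split)
qed

lemma gradient_inequality:
  fixes h :: "'a::euclidean_space \<Rightarrow> ereal"
  assumes G: "Gamma0 h" and c: "c \<in> interior (edom h)"
    and D: "GDERIV (\<lambda>w. real_of_ereal (h w)) c :> D" and a: "a \<in> edom h"
  shows "inner (a - c) D \<le> real_of_ereal (h a) - real_of_ereal (h c)"
proof -
  define \<phi> where "\<phi> t = real_of_ereal (h (c + t *\<^sub>R (a - c)))" for t :: real
  have "((\<lambda>t. (\<phi> t - \<phi> 0) / t) \<longlongrightarrow> inner (a - c) D) (at_right 0)"
    using gderiv_difference_quotient[OF D, of "a - c"] by (simp add: \<phi>_def)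
  moreover have "eventually (\<lambda>t. (\<phi> t - \<phi> 0) / t \<le> \<phi> 1 - \<phi> 0) (at_right 0)"
    using eventually_at_right_real[OF zero_less_one]
  proof eventually_elim
    case (elim t)
    have P: "proper_fun h" using G by (rule Gamma0_proper)
    have "c \<in> edom h" using c interior_subset by blast
    then have "h ((1 - t) *\<^sub>R c + t *\<^sub>R a) \<le> ereal ((1 - t) * \<phi> 0 + t * \<phi> 1)"
      using elim proper_fun_ereal_real[OF P] a unfolding \<phi>_def
      by (intro convex_efunD[OF Gamma0_convex[OF G]]) simp_all
    moreover have "(1 - t) *\<^sub>R c + t *\<^sub>R a = c + t *\<^sub>R (a - c)" by (simp add: algebra_simps)
    ultimately have "\<phi> t \<le> (1 - t) * \<phi> 0 + t * \<phi> 1"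
      unfolding \<phi>_def using proper_fun_neq_minf[OF P, of "c + t *\<^sub>R (a - c)"]
      by (cases "h (c + t *\<^sub>R (a - c))") auto
    then have "\<phi> t - \<phi> 0 \<le> (\<phi> 1 - \<phi> 0) * t" by (simp add: algebra_simps)
    then show ?case using elim by (simp add: pos_divide_le_eq)
  qed
  ultimately have "inner (a - c) D \<le> \<phi> 1 - \<phi> 0"
    by (rule tendsto_upperbound) simp
  then show ?thesis by (simp add: \<phi>_def)
qed

lemma gderiv_eq_subgradient:
  fixes h :: "'a::euclidean_space \<Rightarrow> ereal"
  assumes P: "proper_fun h" and c: "c \<in> interior (edom h)"
    and D: "GDERIV (\<lambda>w. real_of_ereal (h w)) c :> D" and z: "z \<in> subdiff h c"
  shows "D = z"
proof -
  let ?f = "\<lambda>y. real_of_ereal (h y) - inner y z"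
  have "GDERIV (\<lambda>y. inner y z) c :> z"
    unfolding gderiv_def by (rule bounded_linear_imp_has_derivative[OF bounded_linear_inner_left])
  then have "GDERIV ?f c :> D - z" by (rule GDERIV_diff[OF D])
  moreover have "eventually (\<lambda>y. ?f c \<le> ?f y) (at c)"
    using eventually_at_in_open'[OF open_interior c]
  proof eventually_elim
    case (elim y)
    then have "y \<in> edom h" "c \<in> edom h" using c interior_subset by auto
    then obtain ry rc where "h y = ereal ry" "h c = ereal rc"
      using proper_fun_edomE[OF P] by metis
    moreover have "h c + ereal (inner z (y - c)) \<le> h y" using z unfolding subdiff_def by blast
    ultimately show ?case by (simp add: inner_diff_right inner_commute)
  qed
  ultimately have "(\<lambda>v. inner v (D - z)) = (\<lambda>v. 0)"
    unfolding gderiv_def by (rule has_derivative_local_min)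
  then have "inner (D - z) (D - z) = 0" by metis
  then show ?thesis by simp
qed

section \<open>Attainment in the conjugate and differentiability of the conjugate\<close>

definition attains_fconj :: "('a::real_inner \<Rightarrow> ereal) \<Rightarrow> 'a \<Rightarrow> 'a \<Rightarrow> bool" where
  "attains_fconj h z w \<longleftrightarrow> fconj h z \<le> ereal (inner w z) - h w"

lemma attains_fconj_value:
  assumes "proper_fun h" "fconj h z = ereal c" "attains_fconj h z w"
  shows "h w = ereal (inner w z - c)"
proof -
  have "ereal (inner w z) - h w = ereal c"
    using fenchel_young[of w z h] assms(2,3) unfolding attains_fconj_def by auto
  then show ?thesis using proper_fun_neq_minf[OF assms(1), of w] by (cases "h w") auto
qed

lemma attains_fconj_subdiff:
  assumes "proper_fun h" "fconj h z = ereal c" "attains_fconj h z w"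
  shows "z \<in> subdiff h w"
  unfolding subdiff_def
proof (intro CollectI conjI allI)
  have hw: "h w = ereal (inner w z - c)" by (rule attains_fconj_value[OF assms])
  then show "h w < \<infinity>" by simp
  fix x
  show "h w + ereal (inner z (x - w)) \<le> h x"
  proof (cases "h x")
    case (real r)
    have "inner x z - r \<le> c" using fenchel_young[of x z h] real assms(2) by simp
    then show ?thesis using hw real by (simp add: inner_diff_right inner_commute)
  qed (use proper_fun_neq_minf[OF assms(1), of x] in auto)
qed

lemma attains_fconj_convex_comb:
  assumes "Gamma0 h" "fconj h z = ereal c" "attains_fconj h z w1" "attains_fconj h z w2"
    "0 \<le> t" "t \<le> 1"
  shows "attains_fconj h z ((1 - t) *\<^sub>R w1 + t *\<^sub>R w2)"
proof -
  let ?p = "(1 - t) *\<^sub>R w1 + t *\<^sub>R w2"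
  have P: "proper_fun h" using assms(1) by (rule Gamma0_proper)
  have "h ?p \<le> ereal ((1 - t) * (inner w1 z - c) + t * (inner w2 z - c))"
    using attains_fconj_value[OF P assms(2)] assms(3-6)
    by (intro convex_efunD[OF Gamma0_convex[OF assms(1)]]) simp_all
  also have "(1 - t) * (inner w1 z - c) + t * (inner w2 z - c) = inner ?p z - c"
    by (simp add: inner_add_left algebra_simps)
  finally show ?thesis
    using assms(2) proper_fun_neq_minf[OF P, of ?p] unfolding attains_fconj_def
    by (cases "h ?p") auto
qed

lemma attains_fconj_unique:
  assumes G: "Gamma0 h" and SC: "essentially_strictly_convex h" and c: "fconj h z = ereal c"
    and w1: "attains_fconj h z w1" and w2: "attains_fconj h z w2"
  shows "w1 = w2"
proof (rule ccontr)
  assume ne: "w1 \<noteq> w2"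
  have P: "proper_fun h" using G by (rule Gamma0_proper)
  have "closed_segment w1 w2 \<subseteq> dom_subdiff h"
    unfolding closed_segment_def dom_subdiff_def
    using attains_fconj_subdiff[OF P c] attains_fconj_convex_comb[OF G c w1 w2] by blast
  then have "strictly_convex_on_efun (closed_segment w1 w2) h"
    using SC unfolding essentially_strictly_convex_def by simp
  then have "\<forall>t::real. 0 < t \<longrightarrow> t < 1 \<longrightarrow>
      h ((1 - t) *\<^sub>R w1 + t *\<^sub>R w2) < ereal (1 - t) * h w1 + ereal t * h w2"
    using ne ends_in_segment[of w1 w2] unfolding strictly_convex_on_efun_def by blast
  from this[rule_format, of "1/2"]
  have "h ((1 - 1/2) *\<^sub>R w1 + (1/2) *\<^sub>R w2) < ereal (1 - 1/2) * h w1 + ereal (1/2) * h w2"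
    by simp
  moreover have "attains_fconj h z ((1 - 1/2) *\<^sub>R w1 + (1/2) *\<^sub>R w2)"
    by (rule attains_fconj_convex_comb[OF G c w1 w2]) simp_all
  ultimately show False
    using attains_fconj_value[OF P c] w1 w2 by (simp add: inner_add_left field_simps)
qed

lemma bounded_unique_limit_point_tendsto:
  fixes ws :: "nat \<Rightarrow> 'a::heine_borel"
  assumes "bounded (range ws)" "\<And>r l. strict_mono r \<Longrightarrow> (ws \<circ> r) \<longlonglongrightarrow> l \<Longrightarrow> l = w0"
  shows "ws \<longlonglongrightarrow> w0"
proof (rule tendstoI, rule ccontr)
  fix e :: real assume "e > 0" and far: "\<not> eventually (\<lambda>n. dist (ws n) w0 < e) sequentially"
  obtain r :: "nat \<Rightarrow> nat" where r: "strict_mono r" "\<And>n. \<not> dist (ws (r n)) w0 < e"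
    using not_eventually_sequentiallyD[OF far] by blast
  have "bounded (range (ws \<circ> r))" using assms(1) by (rule bounded_subset) auto
  then obtain l r' where r': "strict_mono r'" "((ws \<circ> r) \<circ> r') \<longlonglongrightarrow> l"
    using bounded_imp_convergent_subsequence by blast
  have "l = w0" using assms(2)[OF strict_mono_o[OF r(1) r'(1)]] r'(2) by (simp add: o_assoc)
  then obtain n where "dist (((ws \<circ> r) \<circ> r') n) w0 < e" using r'(2) \<open>e > 0\<close> unfolding LIMSEQ_def by blast
  then show False using r(2) by simp
qed

lemma attains_fconj_linearization:
  assumes "proper_fun h" "fconj h z = ereal cz" "fconj h y = ereal cy"
    "attains_fconj h z w0" "attains_fconj h y w"
  shows "\<bar>cy - cz - inner (y - z) w0\<bar> \<le> norm (y - z) * norm (w - w0)"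
proof -
  have "ereal (inner w0 y) - h w0 \<le> ereal cy" "ereal (inner w z) - h w \<le> ereal cz"
    using fenchel_young assms(2,3) by metis+
  then have "0 \<le> cy - cz - inner (y - z) w0" "cy - cz - inner (y - z) w0 \<le> inner (y - z) (w - w0)"
    using attains_fconj_value[OF assms(1,2,4)] attains_fconj_value[OF assms(1,3,5)]
    by (simp_all add: inner_diff_left inner_diff_right inner_commute)
  moreover have "inner (y - z) (w - w0) \<le> norm (y - z) * norm (w - w0)" by (rule norm_cauchy_schwarz)
  ultimately show ?thesis by simp
qed

context
  fixes h :: "'a::euclidean_space \<Rightarrow> ereal" and z :: 'a and d B :: real
  assumes G: "Gamma0 h" and d_pos: "d > 0"
    and cball_sub: "cball z (2 * d) \<subseteq> interior (edom (fconj h))"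
    and fconj_bound: "\<And>y. y \<in> cball z (2 * d) \<Longrightarrow> \<bar>real_fconj h y\<bar> \<le> B"
begin

lemma fconj_finite_cball2: "y \<in> cball z (2 * d) \<Longrightarrow> fconj h y = ereal (real_fconj h y)"
  using fconj_edom_finite[OF Gamma0_proper[OF G]] cball_sub interior_subset by blast

lemma fconj_finite_cball: "y \<in> cball z d \<Longrightarrow> fconj h y = ereal (real_fconj h y)"
  using fconj_finite_cball2 d_pos by simp

lemma cball_sub_interior: "cball z d \<subseteq> interior (edom (fconj h))"
  using cball_sub subset_cball[of d "2 * d" z] d_pos by auto

text \<open>An almost-maximizer \<open>x\<close> at \<open>z'\<close> is bounded because the conjugate, tested at
  \<open>z' + d x / \<parallel>x\<parallel>\<close> inside the larger ball, is bounded by \<open>B\<close>.\<close>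
lemma near_attains_fconj_bounded:
  assumes z': "z' \<in> cball z d" and near: "ereal (real_fconj h z' - 1) \<le> ereal (inner x z') - h x"
  shows "norm x \<le> (2 * B + 1) / d"
proof (cases "x = 0")
  case True
  have "0 \<le> B" using order_trans[OF abs_ge_zero fconj_bound[of z]] d_pos by simp
  then show ?thesis using True d_pos by simp
next
  case False
  define p where "p = z' + (d / norm x) *\<^sub>R x"
  have "dist z p \<le> dist z z' + dist z' p" by (rule dist_triangle)
  also have "dist z' p = d" using False d_pos by (simp add: p_def dist_norm)
  finally have p: "p \<in> cball z (2 * d)" using z' by simp
  obtain r where r: "h x = ereal r"
    using near proper_fun_neq_minf[OF Gamma0_proper[OF G], of x] by (cases "h x") auto
  have "ereal (inner x p) - h x \<le> fconj h p" by (rule fenchel_young)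
  then have "inner x p - r \<le> real_fconj h p" using r fconj_finite_cball2[OF p] by simp
  moreover have "real_fconj h z' - 1 \<le> inner x z' - r" using near r by simp
  moreover have "inner x p = inner x z' + d * norm x" using False
    by (simp add: p_def inner_add_right power2_norm_eq_inner[symmetric] power2_eq_square)
  ultimately have "d * norm x \<le> real_fconj h p - real_fconj h z' + 1" by simp
  also have "\<dots> \<le> 2 * B + 1" using fconj_bound[OF p] fconj_bound[of z'] z' d_pos by simp
  finally show ?thesis using d_pos by (simp add: pos_le_divide_eq mult.commute)
qed

lemma near_attains_fconj_limit:
  assumes zs: "\<And>j. zs j \<in> cball z d" and zs_lim: "zs \<longlonglongrightarrow> z'" and z': "z' \<in> cball z d"
    and xs_lim: "xs \<longlonglongrightarrow> w" and es_lim: "es \<longlonglongrightarrow> 0"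
    and near: "\<And>j. ereal (real_fconj h (zs j) - es j) \<le> ereal (inner (xs j) (zs j)) - h (xs j)"
  shows "attains_fconj h z' w"
proof -
  have P: "proper_fun h" using G by (rule Gamma0_proper)
  have "h (xs j) \<le> ereal (inner (xs j) (zs j) - real_fconj h (zs j) + es j)" for j
    using near[of j] proper_fun_neq_minf[OF P, of "xs j"] by (cases "h (xs j)") auto
  moreover have "(\<lambda>j. real_fconj h (zs j)) \<longlonglongrightarrow> real_fconj h z'"
    using zs z' cball_sub_interior
    by (intro continuous_on_tendsto_compose[OF continuous_on_real_fconj[OF P] zs_lim]
        always_eventually) auto
  then have "(\<lambda>j. inner (xs j) (zs j) - real_fconj h (zs j) + es j) \<longlonglongrightarrow> inner w z' - real_fconj h z' + 0"
    by (intro tendsto_intros xs_lim zs_lim es_lim)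
  ultimately have "h w \<le> ereal (inner w z' - real_fconj h z' + 0)"
    by (rule lsc_efunD[OF Gamma0_lsc[OF G] _ xs_lim])
  then show ?thesis
    using fconj_finite_cball[OF z'] proper_fun_neq_minf[OF P, of w] unfolding attains_fconj_def
    by (cases "h w") auto
qed

lemma attains_fconj_exists:
  assumes z': "z' \<in> cball z d"
  shows "\<exists>w. attains_fconj h z' w"
proof -
  have "\<exists>x. ereal (real_fconj h z' - 1 / Suc j) < ereal (inner x z') - h x" for j :: nat
  proof -
    have "ereal (real_fconj h z' - 1 / Suc j) < ereal (real_fconj h z')" by simp
    also have "\<dots> = fconj h z'" using fconj_finite_cball[OF z'] by simp
    finally show ?thesis unfolding fconj_def less_SUP_iff by auto
  qed
  then obtain xs where xs: "\<And>j. ereal (real_fconj h z' - 1 / Suc j) < ereal (inner (xs j) z') - h (xs j)"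
    by metis
  have "norm (xs j) \<le> (2 * B + 1) / d" for j
  proof (rule near_attains_fconj_bounded[OF z'])
    have "real_fconj h z' - 1 \<le> real_fconj h z' - 1 / Suc j" by (simp add: divide_le_eq)
    then show "ereal (real_fconj h z' - 1) \<le> ereal (inner (xs j) z') - h (xs j)"
      using xs[of j] by (meson ereal_less_eq(3) less_imp_le order_trans)
  qed
  then have "bounded (range xs)" unfolding bounded_iff by auto
  then obtain w r where r: "strict_mono r" "(xs \<circ> r) \<longlonglongrightarrow> w"
    using bounded_imp_convergent_subsequence by blast
  have es: "(\<lambda>j. 1 / real (Suc (r j))) \<longlonglongrightarrow> 0"
    using LIMSEQ_subseq_LIMSEQ[OF LIMSEQ_Suc[OF lim_inverse_n'] r(1)] by (simp add: o_def)
  have "attains_fconj h z' w"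
  proof (rule near_attains_fconj_limit[of "\<lambda>_. z'" z' "xs \<circ> r" w, OF _ _ z' r(2) es])
    show "ereal (real_fconj h z' - 1 / real (Suc (r j)))
        \<le> ereal (inner ((xs \<circ> r) j) z') - h ((xs \<circ> r) j)" for j
      using xs[of "r j"] by simp
  qed (use z' in auto)
  then show ?thesis by blast
qed

lemma attains_fconj_tendsto:
  assumes SC: "essentially_strictly_convex h" and w0: "attains_fconj h z w0"
    and zs: "\<And>n. zs n \<in> cball z d" "zs \<longlonglongrightarrow> z" and ws: "\<And>n. attains_fconj h (zs n) (ws n)"
  shows "ws \<longlonglongrightarrow> w0"
proof (rule bounded_unique_limit_point_tendsto)
  have near: "ereal (real_fconj h (zs n) - 0) \<le> ereal (inner (ws n) (zs n)) - h (ws n)" for n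
    using ws[of n] fconj_finite_cball[OF zs(1)] unfolding attains_fconj_def by simp
  have "norm (ws n) \<le> (2 * B + 1) / d" for n
  proof (rule near_attains_fconj_bounded[OF zs(1)])
    show "ereal (real_fconj h (zs n) - 1) \<le> ereal (inner (ws n) (zs n)) - h (ws n)"
      using near[of n] by (rule order_trans[rotated]) simp
  qed
  then show "bounded (range ws)" unfolding bounded_iff by auto
  fix r l assume r: "strict_mono r" "(ws \<circ> r) \<longlonglongrightarrow> l"
  have "attains_fconj h z l"
  proof (rule near_attains_fconj_limit[of "zs \<circ> r" z "ws \<circ> r" l "\<lambda>_. 0"])
    show "(zs \<circ> r) \<longlonglongrightarrow> z" using LIMSEQ_subseq_LIMSEQ[OF zs(2) r(1)] .
    show "\<And>j. ereal (real_fconj h ((zs \<circ> r) j) - 0)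
        \<le> ereal (inner ((ws \<circ> r) j) ((zs \<circ> r) j)) - h ((ws \<circ> r) j)"
      using near by simp
  qed (use zs(1) d_pos r(2) in auto)
  then show "l = w0"
    using attains_fconj_unique[OF G SC fconj_finite_cball[of z] _ w0] d_pos by simp
qed

text \<open>Danskin's argument: the maximizer at \<open>y\<close> tends to \<open>w\<^sub>0\<close> as \<open>y \<rightarrow> z\<close>, and
  \<open>attains_fconj_linearization\<close> bounds the first-order remainder by \<open>\<parallel>y - z\<parallel>\<close> times that distance.\<close>
lemma fconj_has_gderiv:
  assumes SC: "essentially_strictly_convex h" and w0: "attains_fconj h z w0"
  shows "GDERIV (real_fconj h) z :> w0"
proof -
  define W where "W y = (SOME w. attains_fconj h y w)" for y
  have W: "attains_fconj h y (W y)" if "y \<in> cball z d" for y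
    unfolding W_def using attains_fconj_exists[OF that] by (rule someI_ex)
  have "(W \<longlongrightarrow> w0) (at z within cball z d)"
    unfolding tendsto_at_iff_sequentially
  proof (intro allI impI)
    fix X assume X: "\<forall>i. X i \<in> cball z d - {z}" "X \<longlonglongrightarrow> z"
    then show "(W \<circ> X) \<longlonglongrightarrow> w0"
      unfolding comp_def by (intro attains_fconj_tendsto[OF SC w0 _ X(2)] W) auto
  qed
  then have "(W \<longlongrightarrow> w0) (at z)"
    using at_within_interior[of z "cball z d"] d_pos by simp
  then have "((\<lambda>y. norm (W y - w0)) \<longlongrightarrow> 0) (at z)"
    by (intro tendsto_norm_zero LIM_zero)
  moreover have "eventually (\<lambda>y. norm (\<bar>real_fconj h y - real_fconj h z - inner (y - z) w0\<bar> / norm (y - z))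
      \<le> norm (W y - w0)) (at z)"
    using eventually_at_ball[OF d_pos]
  proof eventually_elim
    case (elim y)
    then have "\<bar>real_fconj h y - real_fconj h z - inner (y - z) w0\<bar> \<le> norm (y - z) * norm (W y - w0)"
      using d_pos fconj_finite_cball W
      by (intro attains_fconj_linearization[OF Gamma0_proper[OF G] _ _ w0]) auto
    then show ?case by (simp add: divide_le_eq mult.commute)
  qed
  ultimately have
    "((\<lambda>y. \<bar>real_fconj h y - real_fconj h z - inner (y - z) w0\<bar> / norm (y - z)) \<longlongrightarrow> 0) (at z)"
    by (rule Lim_null_comparison[rotated])
  then show ?thesis
    unfolding gderiv_def has_derivative_iff_norm by (simp add: bounded_linear_inner_left)
qed

end

lemma fconj_gderiv_attains:
  fixes h :: "'a::euclidean_space \<Rightarrow> ereal"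
  assumes G: "Gamma0 h" and SC: "essentially_strictly_convex h" and z: "z \<in> interior (edom (fconj h))"
  obtains w where "attains_fconj h z w" "GDERIV (real_fconj h) z :> w"
proof -
  obtain d B where dB: "d > 0" "cball z (2 * d) \<subseteq> interior (edom (fconj h))"
    "\<And>y. y \<in> cball z (2 * d) \<Longrightarrow> \<bar>real_fconj h y\<bar> \<le> B"
    using fconj_locally_bounded[OF Gamma0_proper[OF G] z] by blast
  then obtain w where "attains_fconj h z w" using attains_fconj_exists[OF G dB, of z] by auto
  then show ?thesis using that fconj_has_gderiv[OF G dB SC] by blast
qed

lemma subdiff_egrad_fconj:
  fixes h :: "'a::euclidean_space \<Rightarrow> ereal"
  assumes G: "Gamma0 h" and SC: "essentially_strictly_convex h" and z: "z \<in> interior (edom (fconj h))"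
  shows "z \<in> subdiff h (egrad (fconj h) z)"
proof -
  obtain w where w: "attains_fconj h z w" "GDERIV (real_fconj h) z :> w"
    using fconj_gderiv_attains[OF assms] .
  have "fconj h z = ereal (real_fconj h z)"
    using fconj_edom_finite[OF Gamma0_proper[OF G]] z interior_subset by blast
  then show ?thesis
    using attains_fconj_subdiff[OF Gamma0_proper[OF G] _ w(1)]
      egrad_eq[OF w(2)[unfolded real_fconj_def[abs_def]]]
    by simp
qed

lemma Legendre_egrad_egrad_fconj:
  fixes h :: "'a::euclidean_space \<Rightarrow> ereal"
  assumes L: "Legendre h" and z: "z \<in> interior (edom (fconj h))"
    and w: "egrad (fconj h) z \<in> interior (edom h)"
  shows "egrad h (egrad (fconj h) z) = z"
proof -
  have G: "Gamma0 h" and SC: "essentially_strictly_convex h" and ES: "essentially_smooth h"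
    using L by (auto simp: Legendre_def)
  have "(\<lambda>v. real_of_ereal (h v)) differentiable (at (egrad (fconj h) z))"
    using ES w unfolding essentially_smooth_def by blast
  then show ?thesis
    using gderiv_eq_subgradient[OF Gamma0_proper[OF G] w egrad_gderiv subdiff_egrad_fconj[OF G SC z]]
    by blast
qed

section \<open>The squared norm and Bregman distances\<close>

lemma egrad_half_sq_norm: "egrad (half_sq_norm :: 'a::euclidean_space \<Rightarrow> ereal) c = c"
proof (rule egrad_eq)
  have "((\<lambda>w::'a. (1/2) * inner w w) has_derivative (\<lambda>v. (1/2) * (inner v c + inner c v))) (at c)"
    by (auto intro!: derivative_eq_intros)
  then show "GDERIV (\<lambda>w. real_of_ereal (half_sq_norm w)) c :> c"
    unfolding gderiv_def half_sq_norm_def power2_norm_eq_inner by (simp add: inner_commute)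
qed

lemma fconj_half_sq_norm: "fconj (half_sq_norm :: 'a::real_inner \<Rightarrow> ereal) = half_sq_norm"
proof
  fix v :: 'a
  have "ereal (inner x v) - half_sq_norm x \<le> half_sq_norm v" for x
  proof -
    have "0 \<le> (norm (x - v))\<^sup>2" by simp
    then show ?thesis
      by (simp add: half_sq_norm_def power2_norm_eq_inner inner_diff_left inner_diff_right inner_commute algebra_simps)
  qed
  then have "fconj half_sq_norm v \<le> half_sq_norm v" unfolding fconj_le_iff by blast
  moreover have "ereal (inner v v) - half_sq_norm v \<le> fconj half_sq_norm v" by (rule fenchel_young)
  then have "half_sq_norm v \<le> fconj half_sq_norm v" by (simp add: half_sq_norm_def power2_norm_eq_inner)
  ultimately show "fconj half_sq_norm v = half_sq_norm v" by simp
qed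

lemma Bregman_half_sq_norm:
  "Bregman (half_sq_norm :: 'a::euclidean_space \<Rightarrow> ereal) a c = ereal ((1/2) * (norm (a - c))\<^sup>2)"
  unfolding Bregman_def egrad_half_sq_norm
  by (simp add: edom_def half_sq_norm_def power2_norm_eq_inner inner_diff_left inner_diff_right
      inner_commute algebra_simps)

definition Bregman_real :: "('a::real_inner \<Rightarrow> ereal) \<Rightarrow> 'a \<Rightarrow> 'a \<Rightarrow> real" where
  "Bregman_real h a c = real_of_ereal (h a) - real_of_ereal (h c) - inner (egrad h c) (a - c)"

lemma Bregman_eq_Bregman_real:
  assumes "proper_fun h" "a \<in> edom h" "c \<in> interior (edom h)"
  shows "Bregman h a c = ereal (Bregman_real h a c)"
proof -
  have "c \<in> edom h" using assms(3) interior_subset by blast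
  then obtain ra rc where "h a = ereal ra" "h c = ereal rc"
    using proper_fun_edomE[OF assms(1)] assms(2) by metis
  then show ?thesis using assms(2,3) unfolding Bregman_def Bregman_real_def by simp
qed

lemma Bregman_real_nonneg:
  fixes h :: "'a::euclidean_space \<Rightarrow> ereal"
  assumes "Gamma0 h" "essentially_smooth h" "a \<in> edom h" "c \<in> interior (edom h)"
  shows "0 \<le> Bregman_real h a c"
proof -
  have "(\<lambda>w. real_of_ereal (h w)) differentiable (at c)"
    using assms(2,4) unfolding essentially_smooth_def by blast
  from gradient_inequality[OF assms(1,4) egrad_gderiv[OF this] assms(3)]
  show ?thesis unfolding Bregman_real_def by (simp add: inner_commute)
qed

lemma Bregman_real_three_point:
  "Bregman_real h a c - Bregman_real h a c' - Bregman_real h c' c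
     = inner (egrad h c - egrad h c') (c' - a)"
  unfolding Bregman_real_def by (simp add: inner_diff_left inner_diff_right inner_commute)

lemma four_point_identity:
  fixes a a' c d :: "'a::real_inner"
  shows "2 * inner (a - a') (c - d)
    = (norm (a - d))\<^sup>2 - (norm (a - c))\<^sup>2 + (norm (a' - c))\<^sup>2 - (norm (a' - d))\<^sup>2"
  by (simp add: power2_norm_eq_inner inner_diff_left inner_diff_right inner_commute algebra_simps)

section \<open>The dual perturbation function\<close>

lemma subdiffE:
  assumes "\<And>x. h x \<noteq> -\<infinity>" "q \<in> subdiff h y"
  obtains r where "h y = ereal r" "\<And>y'. ereal (r + inner q (y' - y)) \<le> h y'"
proof -
  obtain r where r: "h y = ereal r"
    using assms unfolding subdiff_def by (cases "h y") auto
  moreover have "ereal (r + inner q (y' - y)) \<le> h y'" for y'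
  proof -
    have "h y + ereal (inner q (y' - y)) \<le> h y'" using assms(2) unfolding subdiff_def by blast
    then show ?thesis using r by simp
  qed
  ultimately show ?thesis using that by blast
qed

lemma fconj_subgradient:
  assumes "proper_fun h" "p \<in> subdiff h x" "h x = ereal r"
  shows "fconj h p = ereal (inner x p - r)"
proof (rule antisym)
  show "fconj h p \<le> ereal (inner x p - r)"
  proof (rule fconj_le_ereal[OF assms(1)])
    fix x' r' assume "h x' = ereal r'"
    moreover have "h x + ereal (inner p (x' - x)) \<le> h x'" using assms(2) unfolding subdiff_def by blast
    ultimately have "ereal (r + inner p (x' - x)) \<le> ereal r'" using assms(3) by simp
    then show "inner x' p - r' \<le> inner x p - r" by (simp add: inner_diff_right inner_commute)
  qed
  show "ereal (inner x p - r) \<le> fconj h p" using fenchel_young[of x p h] assms(3) by simp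
qed

lemma inner_vector_matrix: "inner x (y v* A) = inner (A *v (x::real^'n)) y"
  by (metis dot_lmul_matrix inner_commute)

lemma KKT_subdiffE:
  assumes "(v, u) \<in> KKT f g A b s y"
  obtains "v - transpose A *v y \<in> subdiff f s" "u - b + A *v s \<in> subdiff (fconj g) y"
  using assms unfolding KKT_def by auto

lemma zerT_subdiffE:
  assumes "(xs, ys) \<in> zerT f g A b"
  obtains "- (transpose A *v ys) \<in> subdiff f xs" "A *v xs - b \<in> subdiff (fconj g) ys"
  using assms KKT_subdiffE[of 0 0 f g A b xs ys] unfolding zerT_def by auto

lemma Fstar_solution_lower_bound:
  fixes f :: "real^'n \<Rightarrow> ereal" and g :: "real^'m \<Rightarrow> ereal"
  assumes f: "Gamma0 f" and g: "Gamma0 g" and sol: "(xs, ys) \<in> zerT f g A b"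
  obtains r0 where "Fstar f g A b 0 ys = ereal r0"
    "\<And>v y. ereal (r0 + inner xs v) \<le> Fstar f g A b v y"
proof -
  have Pf: "proper_fun f" and Pg: "\<And>y. fconj g y \<noteq> -\<infinity>"
    using f g fconj_neq_minf by (auto simp: Gamma0_def)
  obtain p: "- (transpose A *v ys) \<in> subdiff f xs" and q: "A *v xs - b \<in> subdiff (fconj g) ys"
    using zerT_subdiffE[OF sol] .
  obtain rf where rf: "f xs = ereal rf" using subdiffE[OF proper_fun_neq_minf[OF Pf] p] by metis
  obtain rg where rg: "fconj g ys = ereal rg"
    and g_ge: "\<And>y. ereal (rg + inner (A *v xs - b) (y - ys)) \<le> fconj g y"
    using subdiffE[OF Pg q] by metis
  define r0 where "r0 = inner xs (- (transpose A *v ys)) - rf + inner b ys + rg"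
  have F0: "Fstar f g A b 0 ys = ereal r0"
    using fconj_subgradient[OF Pf p rf] unfolding Fstar_def r0_def rg by simp
  have "ereal (r0 + inner xs v) \<le> Fstar f g A b v y" for v y
  proof -
    have "ereal (inner xs (v - transpose A *v y) - rf) \<le> fconj f (v - transpose A *v y)"
      using fenchel_young[of xs _ f] rf by simp
    then have "ereal (inner xs (v - transpose A *v y) - rf) + ereal (inner b y)
        + ereal (rg + inner (A *v xs - b) (y - ys)) \<le> Fstar f g A b v y"
      unfolding Fstar_def by (intro add_mono g_ge order_refl)
    moreover have "inner xs (v - transpose A *v y) - rf + inner b y + (rg + inner (A *v xs - b) (y - ys))
        = r0 + inner xs v"
      unfolding r0_def by (simp add: inner_vector_matrix inner_diff_left inner_diff_right)
    ultimately show ?thesis by simp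
  qed
  then show ?thesis using that F0 by blast
qed

lemma Fstar_KKT_upper_bound:
  fixes f :: "real^'n \<Rightarrow> ereal" and g :: "real^'m \<Rightarrow> ereal"
  assumes f: "Gamma0 f" and g: "Gamma0 g" and sol: "(xs, ys) \<in> zerT f g A b"
    and F0: "Fstar f g A b 0 ys = ereal r0" and vu: "(v, u) \<in> KKT f g A b s y"
  shows "Fstar f g A b v y \<le> ereal (r0 + inner s v + inner u (y - ys))"
proof -
  have Pf: "proper_fun f" and Pg: "\<And>y. fconj g y \<noteq> -\<infinity>"
    using f g fconj_neq_minf by (auto simp: Gamma0_def)
  obtain p: "v - transpose A *v y \<in> subdiff f s" and q: "u - b + A *v s \<in> subdiff (fconj g) y"
    using KKT_subdiffE[OF vu] .
  obtain rf where rf: "f s = ereal rf" using subdiffE[OF proper_fun_neq_minf[OF Pf] p] by metis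
  obtain rg where rg: "fconj g y = ereal rg"
    and g_ge: "ereal (rg + inner (u - b + A *v s) (ys - y)) \<le> fconj g ys"
    using subdiffE[OF Pg q] by metis
  have "ereal (inner s (0 - transpose A *v ys) - rf) \<le> fconj f (0 - transpose A *v ys)"
    using fenchel_young[of s "0 - transpose A *v ys" f] rf by simp
  then have "ereal (inner s (0 - transpose A *v ys) - rf) + ereal (inner b ys)
      + ereal (rg + inner (u - b + A *v s) (ys - y)) \<le> ereal r0"
    unfolding F0[symmetric] Fstar_def by (intro add_mono g_ge order_refl)
  then have "inner s (v - transpose A *v y) - rf + inner b y + rg \<le> r0 + inner s v + inner u (y - ys)"
    by (simp add: inner_vector_matrix inner_diff_left inner_diff_right inner_add_left)
  then show ?thesis
    unfolding Fstar_def fconj_subgradient[OF Pf p rf] rg by simp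
qed

lemma KKT_pairing_nonneg:
  fixes f :: "real^'n \<Rightarrow> ereal" and g :: "real^'m \<Rightarrow> ereal"
  assumes f: "Gamma0 f" and g: "Gamma0 g" and sol: "(xs, ys) \<in> zerT f g A b"
    and vu: "(v, u) \<in> KKT f g A b s y"
  shows "0 \<le> inner v (s - xs) + inner u (y - ys)"
proof -
  obtain r0 where F0: "Fstar f g A b 0 ys = ereal r0"
    and lower: "ereal (r0 + inner xs v) \<le> Fstar f g A b v y"
    using Fstar_solution_lower_bound[OF f g sol] by metis
  have "ereal (r0 + inner xs v) \<le> ereal (r0 + inner s v + inner u (y - ys))"
    using lower Fstar_KKT_upper_bound[OF f g sol F0 vu] by (rule order_trans)
  then show ?thesis by (simp add: inner_diff_right inner_commute)
qed

text \<open>\<open>F\<^sup>*\<close> is a supremum of continuous affine functions indexed by \<open>dom f \<times> dom g\<close>; each passes to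
  the limit, and the two suprema are then taken one after the other.\<close>
lemma Fstar_lsc_sequentially:
  fixes f :: "real^'n \<Rightarrow> ereal" and g :: "real^'m \<Rightarrow> ereal"
  assumes Pf: "proper_fun f" and Pg: "proper_fun g" and vs: "vs \<longlonglongrightarrow> v0" and ys: "ys \<longlonglongrightarrow> y0"
    and F: "(\<lambda>k. Fstar f g A b (vs k) (ys k)) \<longlonglongrightarrow> ereal c"
  shows "Fstar f g A b v0 y0 \<le> ereal c"
proof -
  have affine: "inner x1 (v0 - transpose A *v y0) - a1 + inner b y0 + (inner x2 y0 - a2) \<le> c"
    if a1: "f x1 = ereal a1" and a2: "g x2 = ereal a2" for x1 x2 a1 a2
  proof -
    let ?l = "\<lambda>v y. inner x1 (v - transpose A *v y) - a1 + inner b y + (inner x2 y - a2)"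
    have bound: "ereal (?l (vs k) (ys k)) \<le> Fstar f g A b (vs k) (ys k)" for k
    proof -
      have "ereal (inner x1 (vs k - transpose A *v ys k) - a1) \<le> fconj f (vs k - transpose A *v ys k)"
        "ereal (inner x2 (ys k) - a2) \<le> fconj g (ys k)"
        using fenchel_young[of x1 "vs k - transpose A *v ys k" f] fenchel_young[of x2 "ys k" g] a1 a2
        by simp_all
      then have "ereal (inner x1 (vs k - transpose A *v ys k) - a1) + ereal (inner b (ys k))
          + ereal (inner x2 (ys k) - a2) \<le> Fstar f g A b (vs k) (ys k)"
        unfolding Fstar_def by (intro add_mono order_refl)
      then show ?thesis by simp
    qed
    have lim: "(\<lambda>k. ereal (?l (vs k) (ys k))) \<longlonglongrightarrow> ereal (?l v0 y0)"
      by (intro tendsto_intros vs ys bounded_linear.tendsto[OF matrix_vector_mul_bounded_linear])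
    have "ereal (?l v0 y0) \<le> ereal c" by (rule LIMSEQ_le[OF lim F]) (use bound in auto)
    then show ?thesis by simp
  qed
  obtain x2 a2 where x2: "g x2 = ereal a2" using proper_fun_obtains_finite[OF Pg] .
  have "fconj f (v0 - transpose A *v y0) \<le> ereal (c - inner b y0 - (inner x2 y0 - a2))"
    using affine[OF _ x2] by (intro fconj_le_ereal[OF Pf]) (simp add: algebra_simps)
  then obtain F1 where F1: "fconj f (v0 - transpose A *v y0) = ereal F1"
    using fconj_neq_minf[OF Pf, of "v0 - transpose A *v y0"]
    by (cases "fconj f (v0 - transpose A *v y0)") auto
  have "fconj g y0 \<le> ereal (c - inner b y0 - F1)"
  proof (rule fconj_le_ereal[OF Pg])
    fix x2' a2' assume a2': "g x2' = ereal a2'"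
    have "fconj f (v0 - transpose A *v y0) \<le> ereal (c - inner b y0 - (inner x2' y0 - a2'))"
      using affine[OF _ a2'] by (intro fconj_le_ereal[OF Pf]) (simp add: algebra_simps)
    then show "inner x2' y0 - a2' \<le> c - inner b y0 - F1" using F1 by simp
  qed
  then have "Fstar f g A b v0 y0 \<le> ereal F1 + ereal (inner b y0) + ereal (c - inner b y0 - F1)"
    unfolding Fstar_def F1 by (intro add_mono order_refl)
  then show ?thesis by simp
qed

section \<open>Convergence of the method\<close>

lemma telescoping_tendsto_zero:
  fixes V E :: "nat \<Rightarrow> real"
  assumes V: "\<And>k. 0 \<le> V k" and E: "\<And>k. 0 \<le> E k" and descent: "\<And>k. E k \<le> V k - V (Suc k)"
  shows "E \<longlonglongrightarrow> 0"
proof (rule real_tendsto_sandwich[of "\<lambda>_. 0" E _ "\<lambda>k. V k - V (Suc k)"])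
  have "decseq V" using E descent by (intro decseq_SucI) (meson diff_ge_0_iff_ge order_trans)
  then obtain L where L: "V \<longlonglongrightarrow> L" using V decseq_convergent[of V 0] by blast
  have "(\<lambda>k. V k - V (Suc k)) \<longlonglongrightarrow> L - L" using tendsto_diff[OF L LIMSEQ_Suc[OF L]] .
  then show "(\<lambda>k. V k - V (Suc k)) \<longlonglongrightarrow> 0" by simp
qed (use E descent in simp_all)

text \<open>The method for \<open>\<psi> = \<onehalf>\<parallel>\<cdot>\<parallel>\<^sup>2\<close>, with both mirror steps already resolved into explicit
  steps for \<open>x\<close> and for \<open>\<nabla>\<phi>(y)\<close>.\<close>
locale bpalm_half_sq_norm =
  fixes f :: "real^'n \<Rightarrow> ereal" and g :: "real^'m \<Rightarrow> ereal"
    and A :: "real^'n^'m" and b :: "real^'m" and \<phi> :: "real^'m \<Rightarrow> ereal"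
    and x s v :: "nat \<Rightarrow> real^'n" and y u :: "nat \<Rightarrow> real^'m"
    and \<sigma>s \<rho>s :: "nat \<Rightarrow> real" and \<sigma> \<rho> :: real
    and xstar :: "real^'n" and ystar :: "real^'m"
  assumes f: "Gamma0 f" and g: "Gamma0 g" and phi: "Legendre \<phi>"
    and sigma_pos: "\<sigma> > 0" and sigma: "\<And>k. \<sigma>s k \<ge> \<sigma>"
    and rho_lt: "\<rho> < 1" and rho: "\<And>k. 0 \<le> \<rho>s k \<and> \<rho>s k \<le> \<rho>"
    and vu: "\<And>k. (v k, u k) \<in> KKT f g A b (s k) (y (Suc k))"
    and x_step: "\<And>k. x (Suc k) = x k - \<sigma>s k *\<^sub>R v k"
    and y_int: "\<And>k. y k \<in> interior (edom \<phi>)"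
    and grad_step: "\<And>k. egrad \<phi> (y (Suc k)) = egrad \<phi> (y k) - \<sigma>s k *\<^sub>R u k"
    and inexact: "\<And>k. (1/2) * (norm (x (Suc k) - s k))\<^sup>2
      \<le> \<rho>s k * ((1/2) * (norm (x k - s k))\<^sup>2 + Bregman_real \<phi> (y (Suc k)) (y k))"
    and sol: "(xstar, ystar) \<in> zerT f g A b"
    and ystar_dom: "ystar \<in> edom \<phi>"
begin

definition lyapunov :: "nat \<Rightarrow> real" where
  "lyapunov k = (1/2) * (norm (x k - xstar))\<^sup>2 + Bregman_real \<phi> ystar (y k)"

definition residual :: "nat \<Rightarrow> real" where
  "residual k = (1/2) * (norm (x k - s k))\<^sup>2 + Bregman_real \<phi> (y (Suc k)) (y k)"

definition pairing :: "nat \<Rightarrow> real" where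
  "pairing k = inner (v k) (s k - xstar) + inner (u k) (y (Suc k) - ystar)"

lemma y_edom: "y k \<in> edom \<phi>"
  using y_int interior_subset by blast

lemma Bregman_real_phi_nonneg: "a \<in> edom \<phi> \<Longrightarrow> 0 \<le> Bregman_real \<phi> a (y k)"
  using phi y_int by (intro Bregman_real_nonneg) (auto simp: Legendre_def)

lemma lyapunov_nonneg: "0 \<le> lyapunov k"
  unfolding lyapunov_def using Bregman_real_phi_nonneg[OF ystar_dom] by simp

lemma residual_nonneg: "0 \<le> residual k"
  unfolding residual_def using Bregman_real_phi_nonneg[OF y_edom, of "Suc k" k] by simp

lemma pairing_nonneg: "0 \<le> pairing k"
  unfolding pairing_def by (rule KKT_pairing_nonneg[OF f g sol vu])

lemma lyapunov_identity:
  "\<sigma>s k * pairing k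
     = lyapunov k - lyapunov (Suc k) - residual k + (1/2) * (norm (x (Suc k) - s k))\<^sup>2"
proof -
  have "\<sigma>s k * inner (v k) (s k - xstar) = inner (x k - x (Suc k)) (s k - xstar)"
    using x_step[of k] by simp
  moreover note four_point_identity[of "x k" "x (Suc k)" "s k" xstar]
  moreover have "\<sigma>s k * inner (u k) (y (Suc k) - ystar)
      = Bregman_real \<phi> ystar (y k) - Bregman_real \<phi> ystar (y (Suc k)) - Bregman_real \<phi> (y (Suc k)) (y k)"
    unfolding Bregman_real_three_point grad_step by simp
  ultimately show ?thesis
    unfolding pairing_def lyapunov_def residual_def distrib_left by linarith
qed

lemma lyapunov_descent: "\<sigma> * pairing k + (1 - \<rho>) * residual k \<le> lyapunov k - lyapunov (Suc k)"
proof -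
  have "(1/2) * (norm (x (Suc k) - s k))\<^sup>2 \<le> \<rho>s k * residual k"
    using inexact[of k] by (simp add: residual_def)
  also have "\<dots> \<le> \<rho> * residual k" using rho[of k] residual_nonneg[of k] by (simp add: mult_right_mono)
  finally have "(1/2) * (norm (x (Suc k) - s k))\<^sup>2 \<le> \<rho> * residual k" .
  moreover have "\<sigma> * pairing k \<le> \<sigma>s k * pairing k"
    using sigma[of k] pairing_nonneg[of k] by (rule mult_right_mono)
  ultimately show ?thesis using lyapunov_identity[of k] by (simp add: algebra_simps)
qed

lemma residual_tendsto_zero: "residual \<longlonglongrightarrow> 0"
proof -
  have "(1 - \<rho>) * residual k \<le> lyapunov k - lyapunov (Suc k)" for k
    using lyapunov_descent[of k] mult_nonneg_nonneg[OF less_imp_le[OF sigma_pos] pairing_nonneg[of k]]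
    by linarith
  then have "(\<lambda>k. (1 - \<rho>) * residual k) \<longlonglongrightarrow> 0"
    using lyapunov_nonneg residual_nonneg rho_lt by (intro telescoping_tendsto_zero[of lyapunov]) auto
  then have "(\<lambda>k. (1 / (1 - \<rho>)) * ((1 - \<rho>) * residual k)) \<longlonglongrightarrow> (1 / (1 - \<rho>)) * 0"
    by (rule tendsto_mult_left)
  then show ?thesis using rho_lt by simp
qed

lemma pairing_tendsto_zero: "pairing \<longlonglongrightarrow> 0"
proof -
  have "\<sigma> * pairing k \<le> lyapunov k - lyapunov (Suc k)" for k
    using lyapunov_descent[of k] mult_nonneg_nonneg[of "1 - \<rho>" "residual k"] residual_nonneg[of k] rho_lt
    by linarith
  then have "(\<lambda>k. \<sigma> * pairing k) \<longlonglongrightarrow> 0"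
    using lyapunov_nonneg pairing_nonneg sigma_pos by (intro telescoping_tendsto_zero[of lyapunov]) auto
  then have "(\<lambda>k. (1 / \<sigma>) * (\<sigma> * pairing k)) \<longlonglongrightarrow> (1 / \<sigma>) * 0"
    by (rule tendsto_mult_left)
  then show ?thesis using sigma_pos by simp
qed

lemma dual_step_tendsto_zero: "v \<longlonglongrightarrow> 0"
proof (rule Lim_null_comparison[OF always_eventually])
  show "\<forall>k. norm (v k) \<le> (2 / \<sigma>) * sqrt (2 * residual k)"
  proof
    fix k
    have "(norm (x k - s k))\<^sup>2 \<le> 2 * residual k"
      using Bregman_real_phi_nonneg[OF y_edom, of "Suc k" k] unfolding residual_def by simp
    then have 1: "norm (x k - s k) \<le> sqrt (2 * residual k)" by (rule real_le_rsqrt)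
    have "\<rho>s k * residual k \<le> residual k"
      using rho[of k] rho_lt residual_nonneg[of k] by (simp add: mult_left_le_one_le)
    then have "(norm (x (Suc k) - s k))\<^sup>2 \<le> 2 * residual k"
      using inexact[of k] unfolding residual_def by simp
    then have 2: "norm (x (Suc k) - s k) \<le> sqrt (2 * residual k)" by (rule real_le_rsqrt)
    have "\<sigma> * norm (v k) \<le> \<sigma>s k * norm (v k)" using sigma[of k] by (simp add: mult_right_mono)
    also have "\<dots> = norm ((x k - s k) - (x (Suc k) - s k))"
      using x_step[of k] sigma[of k] sigma_pos by simp
    also have "\<dots> \<le> norm (x k - s k) + norm (x (Suc k) - s k)" by (rule norm_triangle_ineq4)
    finally show "norm (v k) \<le> (2 / \<sigma>) * sqrt (2 * residual k)"
      using 1 2 sigma_pos by (simp add: field_simps)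
  qed
  have "(\<lambda>k. (2 / \<sigma>) * sqrt (2 * residual k)) \<longlonglongrightarrow> (2 / \<sigma>) * sqrt (2 * 0)"
    by (intro tendsto_intros residual_tendsto_zero)
  then show "(\<lambda>k. (2 / \<sigma>) * sqrt (2 * residual k)) \<longlonglongrightarrow> 0" by simp
qed

lemma Fstar_tendsto: "(\<lambda>k. Fstar f g A b (v k) (y (Suc k))) \<longlonglongrightarrow> Fstar f g A b 0 ystar"
proof -
  obtain r0 where F0: "Fstar f g A b 0 ystar = ereal r0"
    and lower: "\<And>v' y'. ereal (r0 + inner xstar v') \<le> Fstar f g A b v' y'"
    using Fstar_solution_lower_bound[OF f g sol] by metis
  have "r0 + inner (s k) (v k) + inner (u k) (y (Suc k) - ystar) = r0 + inner xstar (v k) + pairing k" for k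
    by (simp add: pairing_def inner_diff_right inner_commute)
  then have upper: "Fstar f g A b (v k) (y (Suc k)) \<le> ereal (r0 + inner xstar (v k) + pairing k)" for k
    using Fstar_KKT_upper_bound[OF f g sol F0 vu] by metis
  have lo: "(\<lambda>k. r0 + inner xstar (v k)) \<longlonglongrightarrow> r0 + inner xstar 0"
    by (intro tendsto_intros dual_step_tendsto_zero)
  have hi: "(\<lambda>k. r0 + inner xstar (v k) + pairing k) \<longlonglongrightarrow> r0 + inner xstar 0 + 0"
    by (intro tendsto_intros dual_step_tendsto_zero pairing_tendsto_zero)
  show ?thesis
    unfolding F0
  proof (rule tendsto_sandwich[of "\<lambda>k. ereal (r0 + inner xstar (v k))" _ _
        "\<lambda>k. ereal (r0 + inner xstar (v k) + pairing k)", OF always_eventually always_eventually])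
    show "(\<lambda>k. ereal (r0 + inner xstar (v k))) \<longlonglongrightarrow> ereal r0" using lo by simp
    show "(\<lambda>k. ereal (r0 + inner xstar (v k) + pairing k)) \<longlonglongrightarrow> ereal r0" using hi by simp
  qed (use lower upper in blast)+
qed

lemma limit_point_argmin:
  assumes r: "strict_mono r" and lim: "(\<lambda>k. y (Suc (r k))) \<longlonglongrightarrow> yinf"
  shows "yinf \<in> argmin_set (Fstar f g A b 0)"
proof -
  have "(\<lambda>k. v (r k)) \<longlonglongrightarrow> 0"
    using LIMSEQ_subseq_LIMSEQ[OF dual_step_tendsto_zero r] by (simp add: o_def)
  moreover obtain r0 where F0: "Fstar f g A b 0 ystar = ereal r0"
    and lower: "\<And>v' y'. ereal (r0 + inner xstar v') \<le> Fstar f g A b v' y'"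
    using Fstar_solution_lower_bound[OF f g sol] by metis
  moreover have "(\<lambda>k. Fstar f g A b (v (r k)) (y (Suc (r k)))) \<longlonglongrightarrow> ereal r0"
    using LIMSEQ_subseq_LIMSEQ[OF Fstar_tendsto r] F0 by (simp add: o_def)
  ultimately have "Fstar f g A b 0 yinf \<le> ereal r0"
    using Fstar_lsc_sequentially[OF Gamma0_proper[OF f] Gamma0_proper[OF g] _ lim] by simp
  moreover have "ereal r0 \<le> Fstar f g A b 0 z" for z using lower[of 0 z] by simp
  ultimately show ?thesis unfolding argmin_set_def by (blast intro: order_trans)
qed

end

theorem mainTheorem14:
  fixes f :: "real^'n \<Rightarrow> ereal" and g :: "real^'m \<Rightarrow> ereal"
    and A :: "real^'n^'m" and b :: "real^'m"
    and \<psi> :: "real^'n \<Rightarrow> ereal" and \<phi> :: "real^'m \<Rightarrow> ereal"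
    and x s v :: "nat \<Rightarrow> real^'n" and y u :: "nat \<Rightarrow> real^'m"
    and \<sigma>s \<rho>s :: "nat \<Rightarrow> real" and \<sigma> \<rho> :: real
    and xstar :: "real^'n" and ystar :: "real^'m"
  assumes f: "Gamma0 f" and g: "Gamma0 g"
    and psi: "\<psi> = half_sq_norm"
    and phi: "Legendre \<phi>"
    and qualif: "interior (edom (sepsum \<psi> \<phi>)) \<inter> domT f g A b \<noteq> {}"
    and x0: "x 0 \<in> interior (edom \<psi>)" and y0: "y 0 \<in> interior (edom \<phi>)"
    and sigma_pos: "\<sigma> > 0" and sigma: "\<And>k. \<sigma>s k \<ge> \<sigma>"
    and rho_lt: "\<rho> < 1" and rho: "\<And>k. 0 \<le> \<rho>s k \<and> \<rho>s k \<le> \<rho>"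
    and s_dom: "\<And>k. s k \<in> edom \<psi>"
    and vu: "\<And>k. (v k, u k) \<in> KKT f g A b (s k) (y (Suc k))"
    and x_arg: "\<And>k. egrad \<psi> (x k) - \<sigma>s k *\<^sub>R v k \<in> interior (edom (fconj \<psi>))"
    and x_upd: "\<And>k. x (Suc k) = egrad (fconj \<psi>) (egrad \<psi> (x k) - \<sigma>s k *\<^sub>R v k)"
    and x_int: "\<And>k. x (Suc k) \<in> interior (edom \<psi>)"
    and y_arg: "\<And>k. egrad \<phi> (y k) - \<sigma>s k *\<^sub>R u k \<in> interior (edom (fconj \<phi>))"
    and y_upd: "\<And>k. y (Suc k) = egrad (fconj \<phi>) (egrad \<phi> (y k) - \<sigma>s k *\<^sub>R u k)"
    and y_int: "\<And>k. y (Suc k) \<in> interior (edom \<phi>)"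
    and inexact: "\<And>k. Bregman \<psi> (s k) (x (Suc k))
                    \<le> ereal (\<rho>s k) * (Bregman \<psi> (s k) (x k) + Bregman \<phi> (y (Suc k)) (y k))"
    and sol: "(xstar, ystar) \<in> zerT f g A b"
    and ystar_dom: "ystar \<in> edom \<phi>"
    and bdd: "bounded (range (\<lambda>k. y (Suc k)))"
  shows "(\<lambda>k. Fstar f g A b (v k) (y (Suc k))) \<longlonglongrightarrow> Fstar f g A b 0 ystar
       \<and> (\<forall>yinf. (\<exists>r. strict_mono r \<and> (\<lambda>k. y (Suc (r k))) \<longlonglongrightarrow> yinf)
                 \<longrightarrow> yinf \<in> argmin_set (Fstar f g A b 0))"
proof -
  have x_step: "x (Suc k) = x k - \<sigma>s k *\<^sub>R v k" for k
    using x_upd[of k] by (simp add: psi fconj_half_sq_norm egrad_half_sq_norm)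
  have y_int_all: "y k \<in> interior (edom \<phi>)" for k
    using y0 y_int by (cases k) auto
  have grad_step: "egrad \<phi> (y (Suc k)) = egrad \<phi> (y k) - \<sigma>s k *\<^sub>R u k" for k
    using Legendre_egrad_egrad_fconj[OF phi y_arg[of k]] y_upd[of k] y_int[of k] by simp
  have "Bregman \<phi> (y (Suc k)) (y k) = ereal (Bregman_real \<phi> (y (Suc k)) (y k))" for k
    using phi y_int_all interior_subset
    by (intro Bregman_eq_Bregman_real) (auto simp: Legendre_def Gamma0_def)
  then have inexact_real: "(1/2) * (norm (x (Suc k) - s k))\<^sup>2
      \<le> \<rho>s k * ((1/2) * (norm (x k - s k))\<^sup>2 + Bregman_real \<phi> (y (Suc k)) (y k))" for k
    using inexact[of k] unfolding psi Bregman_half_sq_norm by (simp add: norm_minus_commute)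
  interpret bpalm_half_sq_norm f g A b \<phi> x s v y u \<sigma>s \<rho>s \<sigma> \<rho> xstar ystar
    using f g phi sigma_pos sigma rho_lt rho vu x_step y_int_all grad_step inexact_real sol ystar_dom
    by unfold_locales
  show ?thesis using Fstar_tendsto limit_point_argmin by blast
qed

end
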